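(* In the analytical model described in the context, assume $\max(T_1,T_2)>1$. For $U\in\{0,\dots,N_1-1\}$ and $\beta>0$ let $F(U,\beta)=b(U,T_1,T_2)\,\beta^{\min\{N_1-U,N_2\}}$. Define $U^*=N_1-N_2-1$ if $\mathcal A_2b_2(N_1-N_2-1,T_1,T_2)<\mathcal A_1b_1(N_1-N_2,T_1,T_2)+\mathcal A_2b_2(N_1-N_2,T_1,T_2)$, and $U^*=N_1-N_2$ otherwise. Then there exists $\bar\beta>0$ such that for all $\beta\in(0,\bar\beta)$, $U^*$ minimizes $F(\cdot,\beta)$ over $\{0,1,\dots,N_1-1\}$.
   Context: Parameters: integers $N_1>N_2\ge1$, $P_1,P_2>0$, $\alpha_1,\alpha_2>2$, $\lambda_1,\lambda_2>0$, $T_1,T_2\ge1$; $U$ ranges over $\{0,\dots,N_1-1\}$. $\mathcal A_1=2\pi\lambda_1\int_0^\infty z e^{-\pi\lambda_1z^2}\exp(-\pi\lambda_2(P_2/P_1)^{2/\alpha_2}z^{2\alpha_1/\alpha_2})dz$, $\mathcal A_2=2\pi\lambda_2\int_0^\infty z e^{-\pi\lambda_2z^2}\exp(-\pi\lambda_1(P_1/P_2)^{2/\alpha_1}z^{2\alpha_2/\alpha_1})dz$, $f_{Y_1}(y)=\frac{2\pi\lambda_1}{\mathcal A_1}y\exp(-\pi(\lambda_1y^2+\lambda_2(P_2/P_1)^{2/\alpha_2}y^{2\alpha_1/\alpha_2}))$, $f_{Y_2}(y)=\frac{2\pi\lambda_2}{\mathcal A_2}y\exp(-\pi(\lambda_1(P_1/P_2)^{2/\alpha_1}y^{2\alpha_2/\alpha_1}+\lambda_2y^2))$.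 $\bar L_j(T_j)=2\pi\lambda_j\int_0^\infty r\int_{(P_j/(P_1T_j))^{1/\alpha_j}r^{\alpha_1/\alpha_j}}^{(P_j/P_1)^{1/\alpha_j}r^{\alpha_1/\alpha_j}}f_{Y_j}(y)dy\,dr$, $\bar L=\bar L_1(T_1)+\bar L_2(T_2)$; $K_0\sim$ Poisson($\bar L$), $u_{\mathrm{IN},0}=\min(U,K_0)$; $p_c(U)=e^{-\bar L}(\sum_{k=0}^{U-1}\frac{\bar L^k}{k!}+U\sum_{k\ge U}\frac{\bar L^k}{(k+1)!})$, $p_{\bar c}=1-p_c$. $\mathcal N_n=\{(n_1,n_2,n_3)\in\mathbb N_0^3:\sum n_i=n\}$, $\mathcal M_n=\{(m_a)_{a=1}^n\in\mathbb N_0^n:\sum_a a\,m_a=n\}$. With $U_1=U$, $Q_1=\Pr(u_{\mathrm{IN},0}=U)$, $U_2=0$, $Q_2=1$, for $j=1,2$ $$b_j(U,T_1,T_2)=Q_j\!\!\sum_{(n_1,n_2,n_3)\in\mathcal N_{N_j-U_j}}\sum_{(m_a)\in\mathcal M_{n_1}}\sum_{(p_a)\in\mathcal M_{n_2}}\sum_{(q_a)\in\mathcal M_{n_3}}\Big(\int_0^\infty y^{\frac{2\alpha_j}{\alpha_1}(\sum m_a+\sum p_a)+\frac{2\alpha_j}{\alpha_2}\sum q_a}f_{Y_j}(y)dy\Big)\prod_{a=1}^{n_1}\frac1{m_a!}\Big(\tfrac{2\pi\lambda_1}{\alpha_1(a-2/\alpha_1)}(\tfrac{P_1}{P_j})^{2/\alpha_1}p_{\bar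 c}(1-T_j^{-(a-2/\alpha_1)})\Big)^{m_a}\prod_{a=1}^{n_2}\frac1{p_a!}\Big(\tfrac{2\pi\lambda_1}{\alpha_1(a-2/\alpha_1)}(\tfrac{P_1}{P_j})^{2/\alpha_1}T_j^{-(a-2/\alpha_1)}\Big)^{p_a}\prod_{a=1}^{n_3}\frac1{q_a!}\Big(\tfrac{2\pi\lambda_2}{\alpha_2(a-2/\alpha_2)}(\tfrac{P_2}{P_j})^{2/\alpha_2}\Big)^{q_a},$$ and $b(U,T_1,T_2)=\mathcal A_2b_2$ if $U<N_1-N_2$, $\mathcal A_1b_1+\mathcal A_2b_2$ if $U=N_1-N_2$, $\mathcal A_1b_1$ if $U>N_1-N_2$. (In the paper's model $b(U,T_1,T_2)\beta^{\min\{N_1-U,N_2\}}$ is the small-$\beta$ asymptotic of the outage probability of a user-centric interference-nulling scheme with maximum nulling degrees of freedom $U$.) *)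

theory Defs
  imports "HOL-Analysis.Analysis"
begin

text \<open>Parameters indexed by j \<in> {1,2}: P j, al j (path-loss exponents alpha_j),
  lam j (densities lambda_j), T j (thresholds), N j (antenna numbers).
  oth j denotes the other tier index.\<close>

definition oth :: "nat \<Rightarrow> nat" where "oth j = (if j = 1 then 2 else 1)"

definition Acal :: "(nat \<Rightarrow> real) \<Rightarrow> (nat \<Rightarrow> real) \<Rightarrow> (nat \<Rightarrow> real) \<Rightarrow> nat \<Rightarrow> real" where
  "Acal P al lam j = 2 * pi * lam j *
     (\<integral>z\<in>{0<..}. z * exp (- pi * lam j * z\<^sup>2) *
        exp (- pi * lam (oth j) * (P (oth j) / P j) powr (2 / al (oth j))
              * z powr (2 * al j / al (oth j))) \<partial>lborel)"

definition fY :: "(nat \<Rightarrow> real) \<Rightarrow> (nat \<Rightarrow> real) \<Rightarrow> (nat \<Rightarrow> real) \<Rightarrow> nat \<Rightarrow> real \<Rightarrow> real" where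
  "fY P al lam j y = 2 * pi * lam j / Acal P al lam j * y *
     exp (- pi * (lam j * y\<^sup>2 + lam (oth j) * (P (oth j) / P j) powr (2 / al (oth j))
              * y powr (2 * al j / al (oth j))))"

definition Lbarj :: "(nat \<Rightarrow> real) \<Rightarrow> (nat \<Rightarrow> real) \<Rightarrow> (nat \<Rightarrow> real) \<Rightarrow> nat \<Rightarrow> real \<Rightarrow> real" where
  "Lbarj P al lam j Tj = 2 * pi * lam j *
     (\<integral>r\<in>{0<..}. r *
        (\<integral>y\<in>{(P j / (P 1 * Tj)) powr (1 / al j) * r powr (al 1 / al j) ..
               (P j / P 1) powr (1 / al j) * r powr (al 1 / al j)}. fY P al lam j y \<partial>lborel)
      \<partial>lborel)"

definition Lbar :: "(nat \<Rightarrow> real) \<Rightarrow> (nat \<Rightarrow> real) \<Rightarrow> (nat \<Rightarrow> real) \<Rightarrow> (nat \<Rightarrow> real) \<Rightarrow> real" where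
  "Lbar P al lam T = Lbarj P al lam 1 (T 1) + Lbarj P al lam 2 (T 2)"

definition poisson :: "real \<Rightarrow> nat \<Rightarrow> real" where
  "poisson L k = exp (- L) * L ^ k / fact k"

text \<open>\<open>Q_1 = Pr(min(U,K_0) = U)\<close> for \<open>K_0 \<sim> Poisson(Lbar)\<close>.\<close>
definition Q1 :: "(nat \<Rightarrow> real) \<Rightarrow> (nat \<Rightarrow> real) \<Rightarrow> (nat \<Rightarrow> real) \<Rightarrow> (nat \<Rightarrow> real) \<Rightarrow> nat \<Rightarrow> real" where
  "Q1 P al lam T U = (\<Sum>k. if min U k = U then poisson (Lbar P al lam T) k else 0)"

definition pc :: "(nat \<Rightarrow> real) \<Rightarrow> (nat \<Rightarrow> real) \<Rightarrow> (nat \<Rightarrow> real) \<Rightarrow> (nat \<Rightarrow> real) \<Rightarrow> nat \<Rightarrow> real" where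
  "pc P al lam T U = (let L = Lbar P al lam T in
     exp (- L) * ((\<Sum>k<U. L ^ k / fact k)
                  + real U * (\<Sum>k. if U \<le> k then L ^ k / fact (k + 1) else 0)))"

text \<open>\<open>\<N>_n\<close>: triples summing to n; \<open>\<M>_n\<close>: tuples \<open>(m_a)_{a=1..n}\<close> with \<open>\<Sum> a m_a = n\<close>,
  represented as functions nat \<Rightarrow> nat vanishing outside {1..n}.\<close>
definition triples :: "nat \<Rightarrow> (nat \<times> nat \<times> nat) set" where
  "triples n = {(n1, n2, n3). n1 + n2 + n3 = n}"

definition parts :: "nat \<Rightarrow> (nat \<Rightarrow> nat) set" where
  "parts n = {m. (\<forall>a. m a \<noteq> 0 \<longrightarrow> 1 \<le> a \<and> a \<le> n) \<and> (\<Sum>a=1..n. a * m a) = n}"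

definition bj :: "(nat \<Rightarrow> nat) \<Rightarrow> (nat \<Rightarrow> real) \<Rightarrow> (nat \<Rightarrow> real) \<Rightarrow> (nat \<Rightarrow> real)
                   \<Rightarrow> (nat \<Rightarrow> real) \<Rightarrow> nat \<Rightarrow> nat \<Rightarrow> real" where
  "bj N P al lam T U j =
    (let Uj = (if j = 1 then U else 0);
         Qj = (if j = 1 then Q1 P al lam T U else 1);
         pbar = 1 - pc P al lam T U;
         c1 = (\<lambda>a::nat. 2 * pi * lam 1 / (al 1 * (real a - 2 / al 1)) * (P 1 / P j) powr (2 / al 1)
                  * pbar * (1 - T j powr (- (real a - 2 / al 1))));
         c2 = (\<lambda>a::nat. 2 * pi * lam 1 / (al 1 * (real a - 2 / al 1)) * (P 1 / P j) powr (2 / al 1)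
                  * T j powr (- (real a - 2 / al 1)));
         c3 = (\<lambda>a::nat. 2 * pi * lam 2 / (al 2 * (real a - 2 / al 2)) * (P 2 / P j) powr (2 / al 2))
     in Qj * (\<Sum>(n1, n2, n3)\<in>triples (N j - Uj).
               \<Sum>m\<in>parts n1. \<Sum>p\<in>parts n2. \<Sum>q\<in>parts n3.
                 (\<integral>y\<in>{0<..}. y powr (2 * al j / al 1 * real ((\<Sum>a=1..n1. m a) + (\<Sum>a=1..n2. p a))
                                      + 2 * al j / al 2 * real (\<Sum>a=1..n3. q a))
                               * fY P al lam j y \<partial>lborel)
                 * (\<Prod>a=1..n1. (1 / fact (m a)) * c1 a ^ m a)
                 * (\<Prod>a=1..n2. (1 / fact (p a)) * c2 a ^ p a)
                 * (\<Prod>a=1..n3. (1 / fact (q a)) * c3 a ^ q a)))"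

definition bfun :: "(nat \<Rightarrow> nat) \<Rightarrow> (nat \<Rightarrow> real) \<Rightarrow> (nat \<Rightarrow> real) \<Rightarrow> (nat \<Rightarrow> real)
                   \<Rightarrow> (nat \<Rightarrow> real) \<Rightarrow> nat \<Rightarrow> real" where
  "bfun N P al lam T U =
    (if U < N 1 - N 2 then Acal P al lam 2 * bj N P al lam T U 2
     else if U = N 1 - N 2 then Acal P al lam 1 * bj N P al lam T U 1 + Acal P al lam 2 * bj N P al lam T U 2
     else Acal P al lam 1 * bj N P al lam T U 1)"

definition Fout :: "(nat \<Rightarrow> nat) \<Rightarrow> (nat \<Rightarrow> real) \<Rightarrow> (nat \<Rightarrow> real) \<Rightarrow> (nat \<Rightarrow> real)
                   \<Rightarrow> (nat \<Rightarrow> real) \<Rightarrow> nat \<Rightarrow> real \<Rightarrow> real" where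
  "Fout N P al lam T U \<beta> = bfun N P al lam T U * \<beta> ^ min (N 1 - U) (N 2)"

definition Ustar :: "(nat \<Rightarrow> nat) \<Rightarrow> (nat \<Rightarrow> real) \<Rightarrow> (nat \<Rightarrow> real) \<Rightarrow> (nat \<Rightarrow> real)
                   \<Rightarrow> (nat \<Rightarrow> real) \<Rightarrow> nat" where
  "Ustar N P al lam T =
    (if Acal P al lam 2 * bj N P al lam T (N 1 - N 2 - 1) 2
          < Acal P al lam 1 * bj N P al lam T (N 1 - N 2) 1 + Acal P al lam 2 * bj N P al lam T (N 1 - N 2) 2
     then N 1 - N 2 - 1 else N 1 - N 2)"

end

theory Submission
  imports Defs
begin

text \<open>For \<open>U \<le> N\<^sub>1 - N\<^sub>2\<close> the exponent \<open>min (N\<^sub>1 - U) N\<^sub>2\<close> equals \<open>N\<^sub>2\<close>, so these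
  choices compete through the coefficient \<open>b\<close> alone. Below \<open>N\<^sub>1 - N\<^sub>2\<close> the coefficient is
  \<open>A\<^sub>2 b\<^sub>2\<close>, and \<open>b\<^sub>2\<close> is nonincreasing in \<open>U\<close> because the probability \<open>p\<^sub>c\<close> of cancelling an
  interferer grows with \<open>U\<close> while \<open>b\<^sub>2\<close> is a polynomial with nonnegative coefficients in
  \<open>1 - p\<^sub>c\<close>; hence only \<open>N\<^sub>1 - N\<^sub>2 - 1\<close> and \<open>N\<^sub>1 - N\<^sub>2\<close> remain, and \<open>U\<^sup>*\<close> is the better of the two.
  Above \<open>N\<^sub>1 - N\<^sub>2\<close> the exponent is smaller than \<open>N\<^sub>2\<close> while \<open>A\<^sub>1 b\<^sub>1\<close> is strictly positive,
  so these choices lose once \<open>\<beta>\<close> is small. Positivity of \<open>b\<^sub>1\<close> needs \<open>Q\<^sub>1 > 0\<close>, i.e.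
  \<open>Lbar > 0\<close>, and this is where \<open>max T\<^sub>1 T\<^sub>2 > 1\<close> enters: it makes the ring of one tier
  nondegenerate.\<close>

section \<open>Integrals with stretched Gaussian decay\<close>

lemma exp_sums_real: "(\<lambda>k. (L::real) ^ k / fact k) sums exp L"
  using exp_converges[of L] by (simp add: divide_inverse mult.commute)

lemma power_div_fact_le_exp:
  assumes "(y::real) \<ge> 0"
  shows "y ^ m / fact m \<le> exp y"
proof -
  have "(\<Sum>n\<in>{m}. y ^ n / fact n) \<le> (\<Sum>n. y ^ n / fact n)"
    by (rule sum_le_suminf[OF sums_summable[OF exp_sums_real]]) (use assms in auto)
  then show ?thesis
    using sums_unique[OF exp_sums_real] by simp
qed

lemma powr_mult_exp_neg_powr_le:
  fixes c p t x :: real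
  assumes c: "c > 0" and p: "p > 0" and x: "x \<ge> 1"
  defines "m \<equiv> nat \<lceil>(t + 2) / p\<rceil>"
  shows "x powr t * exp (- c * x powr p) \<le> fact m / c ^ m * x powr (-2)"
proof -
  have pm: "p * real m \<ge> t + 2"
  proof -
    have "real m \<ge> (t + 2) / p" unfolding m_def by linarith
    then show ?thesis using p by (simp add: field_simps)
  qed
  define y where "y = c * x powr p"
  have y: "y > 0" using c x unfolding y_def by simp
  have ym: "y ^ m = c ^ m * x powr (p * real m)"
    unfolding y_def using x by (simp add: power_mult_distrib powr_realpow[symmetric] powr_powr)
  have "x powr t * exp (- c * x powr p) = x powr t / exp y"
    by (simp add: y_def exp_minus field_simps)
  also have "\<dots> \<le> x powr t / (y ^ m / fact m)"
    by (rule divide_left_mono[OF power_div_fact_le_exp]) (use y in auto)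
  also have "\<dots> = fact m / c ^ m * x powr (t - p * real m)"
    using c x by (simp add: ym powr_diff field_simps)
  also have "\<dots> \<le> fact m / c ^ m * x powr (-2)"
    using x pm c by (intro mult_left_mono powr_mono) auto
  finally show ?thesis .
qed

lemma set_integrable_powr_neg_two: "set_integrable lborel {1..} (\<lambda>x::real. x powr (-2))"
proof -
  have "(\<lambda>x::real. x powr (-2)) integrable_on {1..}"
    using has_integral_powr_to_inf[of "-2" 1] by (auto simp: integrable_on_def)
  then have "(\<lambda>x::real. x powr (-2)) absolutely_integrable_on {1..}"
    by (rule nonnegative_absolutely_integrable_1) auto
  then show ?thesis
    unfolding set_integrable_def by (subst integrable_completion[symmetric]) auto
qed

lemma set_integrable_powr_mult_exp_neg_powr:
  fixes c p t :: real
  assumes c: "c > 0" and p: "p > 0" and t: "t \<ge> 0"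
  shows "set_integrable lborel {0<..} (\<lambda>x. x powr t * exp (- c * x powr p))"
proof -
  define m where "m = nat \<lceil>(t + 2) / p\<rceil>"
  define K where "K = fact m / c ^ m"
  have K: "K \<ge> 0" unfolding K_def using c by simp
  have int: "integrable lborel (\<lambda>x::real. indicator {0..1} x * 1 + indicator {1..} x * (K * x powr (-2)))"
  proof -
    have "set_integrable lborel {0..1} (\<lambda>x::real. 1::real)"
      by (rule borel_integrable_atLeastAtMost') (rule continuous_on_const)
    moreover have "set_integrable lborel {1..} (\<lambda>x::real. K * x powr (-2))"
      using set_integrable_powr_neg_two unfolding set_integrable_def
      by (simp add: integrable_mult_right mult.left_commute)
    ultimately show ?thesis
      unfolding set_integrable_def by (intro Bochner_Integration.integrable_add) auto
  qed
  have "norm (indicator {0<..} x * (x powr t * exp (- c * x powr p)))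
          \<le> norm (indicator {0..1} x * 1 + indicator {1..} x * (K * x powr (-2)))" for x :: real
  proof -
    consider "x \<le> 0" | "0 < x" "x < 1" | "x \<ge> 1" by linarith
    then show ?thesis
    proof cases
      case 2
      have "x powr t \<le> 1" "exp (- c * x powr p) \<le> 1" using 2 t c by (simp_all add: powr_le1)
      then have "x powr t * exp (- c * x powr p) \<le> 1" by (simp add: mult_le_one)
      then show ?thesis using 2 by simp
    next
      case 3
      have "x powr t * exp (- c * x powr p) \<le> K * x powr (-2)"
        unfolding K_def m_def using powr_mult_exp_neg_powr_le[OF c p 3] .
      then show ?thesis using 3 K by (cases "x = 1") (auto simp: indicator_def)
    qed simp
  qed
  then show ?thesis
    unfolding set_integrable_def
    by (intro Bochner_Integration.integrable_bound[OF int] AE_I2) (simp_all, measurable)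
qed

lemma set_integrable_bounded_by_powr_mult_exp_neg_powr:
  fixes g :: "real \<Rightarrow> real" and c p t C :: real
  assumes c: "c > 0" and p: "p > 0" and t: "t \<ge> 0"
    and meas: "g \<in> borel_measurable lborel"
    and bound: "\<And>x. x > 0 \<Longrightarrow> \<bar>g x\<bar> \<le> C * (x powr t * exp (- c * x powr p))"
  shows "set_integrable lborel {0<..} g"
proof -
  have "integrable lborel (\<lambda>x. C * (indicator {0<..} x *\<^sub>R (x powr t * exp (- c * x powr p))))"
    using set_integrable_powr_mult_exp_neg_powr[OF c p t]
    unfolding set_integrable_def by (rule integrable_mult_right)
  then show ?thesis
    unfolding set_integrable_def
    by (rule Bochner_Integration.integrable_bound)
       (use meas bound in \<open>auto simp: indicator_def intro!: AE_I2 intro: order_trans[OF _ abs_ge_self]\<close>)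
qed

lemma set_integral_pos_if_pos_on_interval:
  fixes f :: "real \<Rightarrow> real"
  assumes int: "set_integrable lborel A f" and pos: "\<And>x. x \<in> A \<Longrightarrow> f x > 0"
    and sub: "{a<..<b} \<subseteq> A" and ab: "a < b"
  shows "(LINT x:A|lborel. f x) > 0"
proof -
  let ?g = "\<lambda>x. indicator A x *\<^sub>R f x"
  have nn: "AE x in lborel. 0 \<le> ?g x" using pos by (auto simp: indicator_def less_imp_le)
  have "integral\<^sup>L lborel ?g \<noteq> 0"
  proof
    assume "integral\<^sup>L lborel ?g = 0"
    then have "AE x in lborel. ?g x = 0"
      using integral_nonneg_eq_0_iff_AE[OF int[unfolded set_integrable_def] nn] by simp
    then have "AE x in lborel. x \<notin> {a<..<b}"
      by eventually_elim (use sub pos in \<open>fastforce simp: indicator_def\<close>)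
    then have "emeasure lborel {a<..<b} = 0"
      by (subst (asm) AE_iff_measurable[OF _ refl])
         (auto simp: greaterThanLessThan_def greaterThan_def lessThan_def Collect_conj_eq[symmetric])
    then show False using ab by simp
  qed
  moreover have "0 \<le> integral\<^sup>L lborel ?g" by (rule integral_nonneg_AE[OF nn])
  ultimately show ?thesis unfolding set_lebesgue_integral_def by simp
qed

section \<open>The serving-distance density of one tier\<close>

locale tier =
  fixes P al lam :: "nat \<Rightarrow> real" and j :: nat
  assumes lam_j: "lam j > 0" and lam_oth: "lam (oth j) > 0"
    and P_j: "P j > 0" and P_oth: "P (oth j) > 0" and P_1: "P 1 > 0"
    and al_j: "al j > 0" and al_oth: "al (oth j) > 0" and al_1: "al 1 > 0"
begin

lemma Acal_pos: "Acal P al lam j > 0"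
proof -
  let ?f = "\<lambda>z. z * exp (- pi * lam j * z\<^sup>2) *
        exp (- pi * lam (oth j) * (P (oth j) / P j) powr (2 / al (oth j)) * z powr (2 * al j / al (oth j)))"
  have "set_integrable lborel {0<..} ?f"
  proof (rule set_integrable_bounded_by_powr_mult_exp_neg_powr[where c="pi * lam j" and p=2 and t=1 and C=1])
    fix x :: real assume x: "x > 0"
    have "exp (- pi * lam (oth j) * (P (oth j) / P j) powr (2 / al (oth j)) * x powr (2 * al j / al (oth j))) \<le> 1"
      using lam_oth by (simp add: mult_nonneg_nonneg)
    then have "?f x \<le> x * exp (- pi * lam j * x\<^sup>2)"
      using x by (intro mult_left_le) auto
    then show "\<bar>?f x\<bar> \<le> 1 * (x powr 1 * exp (- (pi * lam j) * x powr 2))"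
      using x by (simp add: powr_realpow)
  qed (use lam_j in auto)
  then have "(LINT z:{0<..}|lborel. ?f z) > 0"
    by (rule set_integral_pos_if_pos_on_interval[of _ _ 0 1]) auto
  then show ?thesis unfolding Acal_def using lam_j by simp
qed

lemma fY_pos: "y > 0 \<Longrightarrow> fY P al lam j y > 0"
  unfolding fY_def using Acal_pos lam_j by simp

lemma fY_nonneg: "y \<ge> 0 \<Longrightarrow> fY P al lam j y \<ge> 0"
  unfolding fY_def using Acal_pos lam_j by simp

lemma fY_measurable [measurable]: "fY P al lam j \<in> borel_measurable borel"
  unfolding fY_def by measurable

lemma isCont_fY: "y > 0 \<Longrightarrow> isCont (fY P al lam j) y"
  unfolding fY_def by (intro continuous_intros) auto

lemma fY_le_gaussian:
  "y > 0 \<Longrightarrow> fY P al lam j y \<le> 2 * pi * lam j / Acal P al lam j * y * exp (- (pi * lam j) * y\<^sup>2)"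
  unfolding fY_def using Acal_pos lam_j lam_oth
  by (intro mult_left_mono) (auto simp: algebra_simps mult_nonneg_nonneg)

lemma moment_set_integrable:
  assumes s: "s \<ge> 0"
  shows "set_integrable lborel {0<..} (\<lambda>y. y powr s * fY P al lam j y)"
proof (rule set_integrable_bounded_by_powr_mult_exp_neg_powr
    [where c="pi * lam j" and p=2 and t="s + 1" and C="2 * pi * lam j / Acal P al lam j"])
  fix x :: real assume x: "x > 0"
  have "\<bar>x powr s * fY P al lam j x\<bar> = x powr s * fY P al lam j x"
    using x fY_pos[OF x] by simp
  also have "\<dots> \<le> x powr s * (2 * pi * lam j / Acal P al lam j * x * exp (- (pi * lam j) * x\<^sup>2))"
    by (rule mult_left_mono[OF fY_le_gaussian[OF x]]) simp
  also have "\<dots> = 2 * pi * lam j / Acal P al lam j * (x powr (s + 1) * exp (- (pi * lam j) * x powr 2))"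
    using x by (simp add: powr_add powr_realpow)
  finally show "\<bar>x powr s * fY P al lam j x\<bar>
      \<le> 2 * pi * lam j / Acal P al lam j * (x powr (s + 1) * exp (- (pi * lam j) * x powr 2))" .
qed (use s lam_j in auto)

lemma moment_pos: "s \<ge> 0 \<Longrightarrow> (LINT y:{0<..}|lborel. y powr s * fY P al lam j y) > 0"
  by (rule set_integral_pos_if_pos_on_interval[OF moment_set_integrable, of _ 0 1])
     (auto intro!: mult_pos_pos fY_pos)

lemma fY_set_integrable_interval: "0 < A \<Longrightarrow> set_integrable lborel {A..B} (fY P al lam j)"
  by (rule borel_integrable_atLeastAtMost') (auto intro!: continuous_at_imp_continuous_on isCont_fY)

lemma fY_interval_integral_nonneg: "0 \<le> A \<Longrightarrow> (LINT y:{A..B}|lborel. fY P al lam j y) \<ge> 0"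
  unfolding set_lebesgue_integral_def
  by (rule integral_nonneg_AE) (auto intro!: AE_I2 fY_nonneg simp: indicator_def)

lemma fY_interval_integral_pos: "0 < A \<Longrightarrow> A < B \<Longrightarrow> (LINT y:{A..B}|lborel. fY P al lam j y) > 0"
  by (rule set_integral_pos_if_pos_on_interval[OF fY_set_integrable_interval, of A B A B])
     (auto intro!: fY_pos)

lemma fY_interval_integral_le:
  assumes A: "0 < A" and AB: "A \<le> B"
  shows "(LINT y:{A..B}|lborel. fY P al lam j y)
           \<le> B * (2 * pi * lam j / Acal P al lam j * B * exp (- (pi * lam j) * A\<^sup>2))"
proof -
  let ?M = "2 * pi * lam j / Acal P al lam j * B * exp (- (pi * lam j) * A\<^sup>2)"
  have "(LINT y:{A..B}|lborel. fY P al lam j y) \<le> (LINT y:{A..B}|lborel. ?M)"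
  proof (rule set_integral_mono[OF fY_set_integrable_interval[OF A]])
    show "set_integrable lborel {A..B} (\<lambda>y. ?M)"
      by (rule borel_integrable_atLeastAtMost') (rule continuous_on_const)
    fix y assume y: "y \<in> {A..B}"
    have "A\<^sup>2 \<le> y\<^sup>2" using y A by (intro power_mono) auto
    then have "2 * pi * lam j / Acal P al lam j * y * exp (- (pi * lam j) * y\<^sup>2) \<le> ?M"
      using y A Acal_pos lam_j by (intro mult_mono mult_left_mono) auto
    then show "fY P al lam j y \<le> ?M"
      using fY_le_gaussian[of y] y A by simp
  qed
  also have "\<dots> = (B - A) * ?M"
    using AB by (simp add: set_integral_const)
  also have "\<dots> \<le> B * ?M"
    using A AB Acal_pos lam_j by (intro mult_right_mono) auto
  finally show ?thesis .
qed

lemma Lbarj_nonneg: "Lbarj P al lam j Tj \<ge> 0"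
proof -
  have "0 \<le> (LINT r:{0<..}|lborel. r *
        (LINT y:{(P j / (P 1 * Tj)) powr (1 / al j) * r powr (al 1 / al j) ..
               (P j / P 1) powr (1 / al j) * r powr (al 1 / al j)}|lborel. fY P al lam j y))"
    unfolding set_lebesgue_integral_def[of lborel "{0<..}"]
    by (rule integral_nonneg_AE, rule AE_I2)
       (auto simp: indicator_def intro!: mult_nonneg_nonneg fY_interval_integral_nonneg)
  then show ?thesis unfolding Lbarj_def using lam_j by simp
qed

lemma Lbarj_integrand_set_integrable:
  assumes a: "a > 0" and ab: "a \<le> b" and g: "g > 0"
  shows "set_integrable lborel {0<..}
           (\<lambda>r. r * (LINT y:{a * r powr g .. b * r powr g}|lborel. fY P al lam j y))"
proof (rule set_integrable_bounded_by_powr_mult_exp_neg_powr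
    [where c="pi * lam j * a\<^sup>2" and p="2 * g" and t="1 + 2 * g" and C="2 * pi * lam j / Acal P al lam j * b\<^sup>2"])
  show "(\<lambda>r. r * (LINT y:{a * r powr g .. b * r powr g}|lborel. fY P al lam j y)) \<in> borel_measurable lborel"
    unfolding set_lebesgue_integral_def atLeastAtMost_iff indicator_def by measurable
  fix r :: real assume r: "r > 0"
  define A where "A = a * r powr g"
  define B where "B = b * r powr g"
  have A: "A > 0" "A \<le> B" unfolding A_def B_def using a ab r by simp_all
  have "\<bar>r * (LINT y:{A..B}|lborel. fY P al lam j y)\<bar> = r * (LINT y:{A..B}|lborel. fY P al lam j y)"
    using r fY_interval_integral_nonneg[of A B] A by simp
  also have "\<dots> \<le> r * (B * (2 * pi * lam j / Acal P al lam j * B * exp (- (pi * lam j) * A\<^sup>2)))"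
    using fY_interval_integral_le[OF A] r by (intro mult_left_mono) auto
  also have "\<dots> = 2 * pi * lam j / Acal P al lam j * b\<^sup>2
                  * (r powr (1 + 2 * g) * exp (- (pi * lam j * a\<^sup>2) * r powr (2 * g)))"
    unfolding A_def B_def using r
    by (simp add: power2_eq_square powr_mult_base field_simps flip: powr_add)
  finally show "\<bar>r * (LINT y:{A..B}|lborel. fY P al lam j y)\<bar>
      \<le> 2 * pi * lam j / Acal P al lam j * b\<^sup>2
         * (r powr (1 + 2 * g) * exp (- (pi * lam j * a\<^sup>2) * r powr (2 * g)))" .
qed (use lam_j a g in auto)

lemma Lbarj_pos:
  assumes T: "Tj > 1"
  shows "Lbarj P al lam j Tj > 0"
proof -
  define a where "a = (P j / (P 1 * Tj)) powr (1 / al j)"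
  define b where "b = (P j / P 1) powr (1 / al j)"
  define g where "g = al 1 / al j"
  have a: "a > 0" unfolding a_def using P_j P_1 T by simp
  have ab: "a < b" unfolding a_def b_def using P_j P_1 T al_j
    by (intro powr_less_mono2) (auto simp: field_simps)
  have g: "g > 0" unfolding g_def using al_1 al_j by simp
  have "(LINT r:{0<..}|lborel. r * (LINT y:{a * r powr g .. b * r powr g}|lborel. fY P al lam j y)) > 0"
    using Lbarj_integrand_set_integrable[OF a less_imp_le[OF ab] g]
  proof (rule set_integral_pos_if_pos_on_interval[of _ _ 0 1])
    fix r :: real assume "r \<in> {0<..}"
    then show "r * (LINT y:{a * r powr g .. b * r powr g}|lborel. fY P al lam j y) > 0"
      using ab a by (intro mult_pos_pos fY_interval_integral_pos) auto
  qed auto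
  then show ?thesis
    unfolding Lbarj_def a_def[symmetric] b_def[symmetric] g_def[symmetric] using lam_j by simp
qed

end

section \<open>The cancellation probability\<close>

definition pc_term :: "real \<Rightarrow> nat \<Rightarrow> nat \<Rightarrow> real" where
  "pc_term L U k = (if k < U then L ^ k / fact k else real U * (L ^ k / fact (k + 1)))"

lemma pc_term_nonneg: "L \<ge> 0 \<Longrightarrow> pc_term L U k \<ge> 0"
  by (simp add: pc_term_def)

lemma pc_term_le: "L \<ge> 0 \<Longrightarrow> pc_term L U k \<le> L ^ k / fact k"
proof (cases "k < U")
  case False
  assume L: "L \<ge> 0"
  have "real U * (L ^ k / fact (k + 1)) \<le> real (k + 1) * (L ^ k / fact (k + 1))"
    using False L by (intro mult_right_mono) auto
  also have "\<dots> = L ^ k / fact k"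
    by (simp add: fact_reduce del: of_nat_Suc)
  finally show ?thesis using False by (simp add: pc_term_def)
qed (simp add: pc_term_def)

lemma summable_pc_term: "L \<ge> 0 \<Longrightarrow> summable (pc_term L U)"
  by (rule summable_comparison_test'[OF sums_summable[OF exp_sums_real[of L]], where N=0])
     (simp add: pc_term_nonneg pc_term_le)

lemma pc_term_mono:
  assumes L: "L \<ge> 0" and U: "U \<le> U'"
  shows "pc_term L U k \<le> pc_term L U' k"
proof -
  consider "k < U" | "U \<le> k" "k < U'" | "U' \<le> k" by linarith
  then show ?thesis
  proof cases
    case 2
    then show ?thesis using pc_term_le[OF L, of U k] by (simp add: pc_term_def)
  next
    case 3
    then show ?thesis using L U by (auto simp: pc_term_def intro!: mult_right_mono simp del: times_divide_eq_right)
  qed (use U in \<open>simp add: pc_term_def\<close>)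
qed

lemma pc_eq_suminf_pc_term:
  assumes L: "Lbar P al lam T \<ge> 0"
  shows "pc P al lam T U = exp (- Lbar P al lam T) * (\<Sum>k. pc_term (Lbar P al lam T) U k)"
proof -
  define L where "L = Lbar P al lam T"
  define f1 where "f1 = (\<lambda>k. if k < U then L ^ k / fact k else 0)"
  define f2 where "f2 = (\<lambda>k. if U \<le> k then L ^ k / fact (k + 1) else (0::real))"
  have s1: "summable f1" unfolding f1_def
    by (rule summable_finite[of "{..<U}"]) auto
  have e1: "suminf f1 = (\<Sum>k<U. L ^ k / fact k)" unfolding f1_def
    by (subst suminf_finite[of "{..<U}"]) auto
  have s2: "summable f2"
    by (rule summable_comparison_test'[OF sums_summable[OF exp_sums_real[of L]], where N=0])
       (use L in \<open>auto simp: f2_def L_def intro!: divide_left_mono fact_mono\<close>)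
  have "(\<Sum>k. pc_term L U k) = (\<Sum>k. f1 k + real U * f2 k)"
    by (rule arg_cong[where f=suminf]) (auto simp: pc_term_def f1_def f2_def fun_eq_iff)
  also have "\<dots> = (\<Sum>k<U. L ^ k / fact k) + real U * suminf f2"
    using suminf_add[OF s1 summable_mult[OF s2]] e1 suminf_mult[OF s2] by simp
  finally show ?thesis
    unfolding pc_def Let_def L_def[symmetric] f2_def by simp
qed

lemma pc_le_1:
  assumes L: "Lbar P al lam T \<ge> 0"
  shows "pc P al lam T U \<le> 1"
proof -
  have "(\<Sum>k. pc_term (Lbar P al lam T) U k) \<le> (\<Sum>k. Lbar P al lam T ^ k / fact k)"
    by (rule suminf_le[OF pc_term_le[OF L] summable_pc_term[OF L] sums_summable[OF exp_sums_real]])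
  then have "exp (- Lbar P al lam T) * (\<Sum>k. pc_term (Lbar P al lam T) U k)
               \<le> exp (- Lbar P al lam T) * exp (Lbar P al lam T)"
    unfolding sums_unique[OF exp_sums_real, symmetric] by (rule mult_left_mono) simp
  then show ?thesis
    unfolding pc_eq_suminf_pc_term[OF L] by (simp add: exp_minus)
qed

lemma pc_mono:
  assumes L: "Lbar P al lam T \<ge> 0" and U: "U \<le> U'"
  shows "pc P al lam T U \<le> pc P al lam T U'"
proof -
  have "(\<Sum>k. pc_term (Lbar P al lam T) U k) \<le> (\<Sum>k. pc_term (Lbar P al lam T) U' k)"
    by (rule suminf_le[OF pc_term_mono[OF L U] summable_pc_term[OF L] summable_pc_term[OF L]])
  then show ?thesis
    unfolding pc_eq_suminf_pc_term[OF L] by (rule mult_left_mono) simp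
qed

lemma Q1_pos:
  assumes L: "Lbar P al lam T > 0"
  shows "Q1 P al lam T U > 0"
proof -
  let ?f = "\<lambda>k. if min U k = U then poisson (Lbar P al lam T) k else 0"
  have "summable ?f"
    by (rule summable_comparison_test'[OF summable_mult[OF sums_summable[OF exp_sums_real]], where N=0])
       (use L in \<open>auto simp: poisson_def\<close>)
  then have "0 < suminf ?f"
    by (rule suminf_pos2[of _ U]) (use L in \<open>auto simp: poisson_def\<close>)
  then show ?thesis unfolding Q1_def .
qed

section \<open>Sums over multiplicity vectors\<close>

lemma finite_triples: "finite (triples n)"
  by (rule finite_subset[of _ "{0..n} \<times> {0..n} \<times> {0..n}"]) (auto simp: triples_def)

lemma parts_le: "m \<in> parts n \<Longrightarrow> m a \<le> n"
proof (cases "a \<in> {1..n}")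
  case True
  assume m: "m \<in> parts n"
  have "1 * m a \<le> a * m a" using True by (intro mult_le_mono1) auto
  also have "\<dots> \<le> (\<Sum>a=1..n. a * m a)" by (rule member_le_sum) (use True in auto)
  finally show ?thesis using m by (simp add: parts_def)
next
  case False
  assume "m \<in> parts n"
  then have "m a = 0" using False by (auto simp: parts_def)
  then show ?thesis by simp
qed

lemma finite_parts: "finite (parts n)"
proof (rule finite_subset)
  show "parts n \<subseteq> {m. \<forall>a. (a \<in> {1..n} \<longrightarrow> m a \<in> {0..n}) \<and> (a \<notin> {1..n} \<longrightarrow> m a = 0)}"
  proof (intro subsetI CollectI allI conjI impI)
    fix m a assume m: "m \<in> parts n"
    show "m a \<in> {0..n}" using parts_le[OF m] by simp
    show "a \<notin> {1..n} \<Longrightarrow> m a = 0" using m by (auto simp: parts_def)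
  qed
  show "finite {m. \<forall>a. (a \<in> {1..n} \<longrightarrow> m a \<in> {0..n}) \<and> (a \<notin> {1..n} \<longrightarrow> m a = 0)}"
    by (rule finite_set_of_finite_funs) auto
qed

definition part_weight :: "(nat \<Rightarrow> real) \<Rightarrow> (nat \<Rightarrow> nat) \<Rightarrow> nat \<Rightarrow> real" where
  "part_weight c m n = (\<Prod>a=1..n. (1 / fact (m a)) * c a ^ m a)"

definition partition_sum ::
  "nat \<Rightarrow> (nat \<Rightarrow> real) \<Rightarrow> (nat \<Rightarrow> real) \<Rightarrow> (nat \<Rightarrow> real) \<Rightarrow> (nat \<Rightarrow> nat \<Rightarrow> real) \<Rightarrow> real" where
  "partition_sum n c1 c2 c3 I = (\<Sum>(n1, n2, n3)\<in>triples n.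
       \<Sum>m\<in>parts n1. \<Sum>p\<in>parts n2. \<Sum>q\<in>parts n3.
         I ((\<Sum>a=1..n1. m a) + (\<Sum>a=1..n2. p a)) (\<Sum>a=1..n3. q a)
         * part_weight c1 m n1 * part_weight c2 p n2 * part_weight c3 q n3)"

lemma part_weight_nonneg: "(\<And>a. a \<ge> 1 \<Longrightarrow> c a \<ge> 0) \<Longrightarrow> part_weight c m n \<ge> 0"
  unfolding part_weight_def by (intro prod_nonneg) auto

lemma part_weight_pos: "(\<And>a. a \<ge> 1 \<Longrightarrow> c a > 0) \<Longrightarrow> part_weight c m n > 0"
  unfolding part_weight_def by (intro prod_pos) auto

lemma part_weight_mono:
  "(\<And>a. a \<ge> 1 \<Longrightarrow> c a \<ge> 0) \<Longrightarrow> (\<And>a. a \<ge> 1 \<Longrightarrow> c a \<le> d a) \<Longrightarrow>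
     part_weight c m n \<le> part_weight d m n"
  unfolding part_weight_def
  by (intro prod_mono conjI mult_nonneg_nonneg mult_left_mono power_mono) auto

lemma partition_sum_nonneg:
  assumes "\<And>k l. I k l \<ge> 0"
    and "\<And>a. a \<ge> 1 \<Longrightarrow> c1 a \<ge> 0" "\<And>a. a \<ge> 1 \<Longrightarrow> c2 a \<ge> 0" "\<And>a. a \<ge> 1 \<Longrightarrow> c3 a \<ge> 0"
  shows "partition_sum n c1 c2 c3 I \<ge> 0"
  unfolding partition_sum_def case_prod_unfold
  by (intro sum_nonneg mult_nonneg_nonneg part_weight_nonneg assms)

lemma partition_sum_mono:
  assumes "\<And>k l. I k l \<ge> 0"
    and "\<And>a. a \<ge> 1 \<Longrightarrow> c1 a \<ge> 0" "\<And>a. a \<ge> 1 \<Longrightarrow> c1 a \<le> d1 a"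
    and "\<And>a. a \<ge> 1 \<Longrightarrow> c2 a \<ge> 0" "\<And>a. a \<ge> 1 \<Longrightarrow> c3 a \<ge> 0"
  shows "partition_sum n c1 c2 c3 I \<le> partition_sum n d1 c2 c3 I"
  unfolding partition_sum_def case_prod_unfold
  by (intro sum_mono mult_right_mono mult_left_mono part_weight_mono part_weight_nonneg assms)

text \<open>Positivity comes from the single term \<open>n1 = n2 = 0\<close>, \<open>q = (n, 0, 0, \<dots>)\<close>.\<close>

lemma partition_sum_pos:
  assumes I: "\<And>k l. I k l > 0"
    and c1: "\<And>a. a \<ge> 1 \<Longrightarrow> c1 a \<ge> 0" and c2: "\<And>a. a \<ge> 1 \<Longrightarrow> c2 a \<ge> 0"
    and c3: "\<And>a. a \<ge> 1 \<Longrightarrow> c3 a > 0"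
  shows "partition_sum n c1 c2 c3 I > 0"
proof -
  have I': "\<And>k l. I k l \<ge> 0" and c3': "\<And>a. a \<ge> 1 \<Longrightarrow> c3 a \<ge> 0"
    using I c3 less_imp_le by blast+
  define q where "q = (\<lambda>a::nat. if a = 1 then n else 0)"
  have "(\<Sum>a=1..n. a * q a) = n"
  proof (cases "n = 0")
    case False
    then have "(\<Sum>a=1..n. a * q a) = (\<Sum>a\<in>{1}. a * q a)"
      by (intro sum.mono_neutral_right) (auto simp: q_def)
    then show ?thesis by (simp add: q_def)
  qed simp
  then have q: "q \<in> parts n" unfolding parts_def q_def by auto
  have parts_0: "parts 0 = {\<lambda>_. 0}" unfolding parts_def by auto
  have "0 < (\<Sum>q\<in>parts n. I 0 (\<Sum>a=1..n. q a) * part_weight c3 q n)"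
    by (intro sum_pos2[OF finite_parts q] mult_pos_pos mult_nonneg_nonneg
        part_weight_pos part_weight_nonneg I I' c3 c3')
  also have "\<dots> = (case (0, 0, n) of (n1, n2, n3) \<Rightarrow>
       \<Sum>m\<in>parts n1. \<Sum>p\<in>parts n2. \<Sum>q\<in>parts n3.
         I ((\<Sum>a=1..n1. m a) + (\<Sum>a=1..n2. p a)) (\<Sum>a=1..n3. q a)
         * part_weight c1 m n1 * part_weight c2 p n2 * part_weight c3 q n3)"
    by (simp add: parts_0 part_weight_def)
  also have "\<dots> \<le> partition_sum n c1 c2 c3 I"
    unfolding partition_sum_def
  proof (rule member_le_sum[OF _ _ finite_triples])
    show "(0, 0, n) \<in> triples n" by (simp add: triples_def)
  qed (unfold case_prod_unfold, intro sum_nonneg mult_nonneg_nonneg part_weight_nonneg I' c1 c2 c3')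
  finally show ?thesis .
qed

section \<open>The coefficient \<open>b\<close>\<close>

definition coef1 ::
  "(nat \<Rightarrow> real) \<Rightarrow> (nat \<Rightarrow> real) \<Rightarrow> (nat \<Rightarrow> real) \<Rightarrow> (nat \<Rightarrow> real) \<Rightarrow> nat \<Rightarrow> real \<Rightarrow> nat \<Rightarrow> real"
  where "coef1 P al lam T j pbar a =
    2 * pi * lam 1 / (al 1 * (real a - 2 / al 1)) * (P 1 / P j) powr (2 / al 1)
      * pbar * (1 - T j powr (- (real a - 2 / al 1)))"

definition coef2 ::
  "(nat \<Rightarrow> real) \<Rightarrow> (nat \<Rightarrow> real) \<Rightarrow> (nat \<Rightarrow> real) \<Rightarrow> (nat \<Rightarrow> real) \<Rightarrow> nat \<Rightarrow> nat \<Rightarrow> real"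
  where "coef2 P al lam T j a =
    2 * pi * lam 1 / (al 1 * (real a - 2 / al 1)) * (P 1 / P j) powr (2 / al 1)
      * T j powr (- (real a - 2 / al 1))"

definition coef3 :: "(nat \<Rightarrow> real) \<Rightarrow> (nat \<Rightarrow> real) \<Rightarrow> (nat \<Rightarrow> real) \<Rightarrow> nat \<Rightarrow> nat \<Rightarrow> real"
  where "coef3 P al lam j a = 2 * pi * lam 2 / (al 2 * (real a - 2 / al 2)) * (P 2 / P j) powr (2 / al 2)"

definition fY_moment ::
  "(nat \<Rightarrow> real) \<Rightarrow> (nat \<Rightarrow> real) \<Rightarrow> (nat \<Rightarrow> real) \<Rightarrow> nat \<Rightarrow> nat \<Rightarrow> nat \<Rightarrow> real"
  where "fY_moment P al lam j k l =
    (\<integral>y\<in>{0<..}. y powr (2 * al j / al 1 * real k + 2 * al j / al 2 * real l) * fY P al lam j y \<partial>lborel)"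

lemma bj_eq_partition_sum:
  "bj N P al lam T U j = (if j = 1 then Q1 P al lam T U else 1) *
     partition_sum (N j - (if j = 1 then U else 0)) (coef1 P al lam T j (1 - pc P al lam T U))
       (coef2 P al lam T j) (coef3 P al lam j) (fY_moment P al lam j)"
  unfolding bj_def partition_sum_def part_weight_def Let_def coef1_def coef2_def coef3_def fY_moment_def ..

lemma diff_two_div_pos:
  assumes "1 \<le> a" and "2 < (x::real)"
  shows "real a - 2 / x > 0"
proof -
  have "2 / x < 1" and "real a \<ge> 1" using assms by simp_all
  then show ?thesis by linarith
qed

locale model =
  fixes P al lam T :: "nat \<Rightarrow> real"
  assumes P_pos: "P 1 > 0" "P 2 > 0"
    and al_gt_2: "al 1 > 2" "al 2 > 2"
    and lam_pos: "lam 1 > 0" "lam 2 > 0"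
    and T_ge_1: "T 1 \<ge> 1" "T 2 \<ge> 1"
begin

sublocale t1: tier P al lam 1
  using P_pos al_gt_2 lam_pos by unfold_locales (auto simp: oth_def)

sublocale t2: tier P al lam 2
  using P_pos al_gt_2 lam_pos by unfold_locales (auto simp: oth_def)

lemma Lbar_nonneg: "Lbar P al lam T \<ge> 0"
  unfolding Lbar_def using t1.Lbarj_nonneg t2.Lbarj_nonneg by (simp add: add_nonneg_nonneg)

lemma Lbar_pos: "max (T 1) (T 2) > 1 \<Longrightarrow> Lbar P al lam T > 0"
  unfolding Lbar_def using t1.Lbarj_nonneg t2.Lbarj_nonneg t1.Lbarj_pos t2.Lbarj_pos
  by (cases "T 1 > 1") (auto simp: add_pos_nonneg add_nonneg_pos)

lemma T_powr_le_1:
  assumes "j \<in> {1, 2}" and "a \<ge> 1"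
  shows "T j powr (- (real a - 2 / al 1)) \<le> 1"
proof -
  have "T j \<ge> 1" using assms T_ge_1 by auto
  then show ?thesis
    using powr_mono[of "- (real a - 2 / al 1)" 0 "T j"] diff_two_div_pos[OF assms(2) al_gt_2(1)] by simp
qed

lemma coef1_nonneg: "j \<in> {1, 2} \<Longrightarrow> pbar \<ge> 0 \<Longrightarrow> a \<ge> 1 \<Longrightarrow> coef1 P al lam T j pbar a \<ge> 0"
  unfolding coef1_def using T_powr_le_1[of j a] diff_two_div_pos[of a "al 1"] al_gt_2 lam_pos P_pos
  by (intro mult_nonneg_nonneg) auto

lemma coef1_mono:
  "j \<in> {1, 2} \<Longrightarrow> pbar \<le> pbar' \<Longrightarrow> a \<ge> 1 \<Longrightarrow> coef1 P al lam T j pbar a \<le> coef1 P al lam T j pbar' a"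
  unfolding coef1_def using T_powr_le_1[of j a] diff_two_div_pos[of a "al 1"] al_gt_2 lam_pos P_pos
  by (intro mult_right_mono mult_left_mono) auto

lemma coef2_nonneg: "a \<ge> 1 \<Longrightarrow> coef2 P al lam T j a \<ge> 0"
  unfolding coef2_def using diff_two_div_pos[of a "al 1"] al_gt_2 lam_pos by simp

lemma coef3_pos: "j \<in> {1, 2} \<Longrightarrow> a \<ge> 1 \<Longrightarrow> coef3 P al lam j a > 0"
  unfolding coef3_def using diff_two_div_pos[of a "al 2"] al_gt_2 lam_pos P_pos by auto

lemma fY_moment_pos:
  assumes j: "j \<in> {1, 2}"
  shows "fY_moment P al lam j k l > 0"
proof -
  have s: "2 * al j / al 1 * real k + 2 * al j / al 2 * real l \<ge> 0"
    using j al_gt_2 by auto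
  from j consider "j = 1" | "j = 2" by auto
  then show ?thesis
  proof cases
    case 1
    show ?thesis unfolding fY_moment_def 1 by (rule t1.moment_pos) (use s 1 in simp)
  next
    case 2
    show ?thesis unfolding fY_moment_def 2 by (rule t2.moment_pos) (use s 2 in simp)
  qed
qed

lemma one_minus_pc_nonneg: "1 - pc P al lam T U \<ge> 0"
  using pc_le_1[OF Lbar_nonneg] by simp

lemma one_minus_pc_antimono: "U \<le> U' \<Longrightarrow> 1 - pc P al lam T U' \<le> 1 - pc P al lam T U"
  using pc_mono[OF Lbar_nonneg] by simp

lemma bj_2_antimono: "U \<le> U' \<Longrightarrow> bj N P al lam T U' 2 \<le> bj N P al lam T U 2"
  unfolding bj_eq_partition_sum
  by (auto intro!: partition_sum_mono coef1_nonneg coef1_mono coef2_nonneg less_imp_le[OF coef3_pos]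
      less_imp_le[OF fY_moment_pos] one_minus_pc_nonneg one_minus_pc_antimono)

lemma bj_1_pos: "max (T 1) (T 2) > 1 \<Longrightarrow> bj N P al lam T U 1 > 0"
  unfolding bj_eq_partition_sum
  by (auto intro!: mult_pos_pos Q1_pos Lbar_pos partition_sum_pos coef1_nonneg coef2_nonneg coef3_pos
      fY_moment_pos one_minus_pc_nonneg)

end

section \<open>Minimisation for small \<open>\<beta>\<close>\<close>

lemma eventually_minimizer_at_right_0:
  fixes B :: "'a \<Rightarrow> real" and e :: "'a \<Rightarrow> nat"
  assumes S: "finite S"
    and e_max: "\<And>U. U \<in> S \<Longrightarrow> e U \<le> e u"
    and B_min: "\<And>U. U \<in> S \<Longrightarrow> e U = e u \<Longrightarrow> B u \<le> B U"
    and B_pos: "\<And>U. U \<in> S \<Longrightarrow> e U < e u \<Longrightarrow> B U > 0"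
  shows "eventually (\<lambda>\<beta>. \<forall>U\<in>S. B u * \<beta> ^ e u \<le> B U * \<beta> ^ e U) (at_right 0)"
  unfolding eventually_ball_finite_distrib[OF S]
proof
  fix U assume U: "U \<in> S"
  show "eventually (\<lambda>\<beta>. B u * \<beta> ^ e u \<le> B U * \<beta> ^ e U) (at_right 0)"
  proof (cases "e U = e u")
    case True
    show ?thesis
      using eventually_at_right_less[of 0]
      by eventually_elim (use B_min[OF U] True in \<open>simp add: mult_right_mono\<close>)
  next
    case False
    define d where "d = e u - e U"
    have d: "d > 0" "e u = d + e U" using False e_max[OF U] unfolding d_def by auto
    have "((\<lambda>\<beta>. B u * \<beta> ^ d) \<longlongrightarrow> B u * 0 ^ d) (at_right 0)"
      by (intro tendsto_intros)
    then have "((\<lambda>\<beta>. B u * \<beta> ^ d) \<longlongrightarrow> 0) (at_right 0)"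
      using d(1) by (simp add: zero_power)
    moreover have "B U > 0"
      using B_pos[OF U] False e_max[OF U] by simp
    ultimately have "eventually (\<lambda>\<beta>. B u * \<beta> ^ d < B U) (at_right 0)"
      by (rule order_tendstoD(2))
    then show ?thesis
      using eventually_at_right_less[of 0]
    proof eventually_elim
      case (elim \<beta>)
      then show ?case
        unfolding d(2) power_add by (simp add: mult.assoc[symmetric] mult_right_mono)
    qed
  qed
qed

lemma Ustar_le: "Ustar N P al lam T \<le> N 1 - N 2"
  unfolding Ustar_def by (simp add: diff_le_mono2)

lemma bfun_Ustar_le:
  assumes N: "N 2 < N 1" and U: "U \<le> N 1 - N 2"
    and b2_antimono: "\<And>U U'. U \<le> U' \<Longrightarrow> bj N P al lam T U' 2 \<le> bj N P al lam T U 2"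
    and A2: "Acal P al lam 2 \<ge> 0"
  shows "bfun N P al lam T (Ustar N P al lam T) \<le> bfun N P al lam T U"
proof -
  let ?k = "N 1 - N 2"
  have Us: "bfun N P al lam T (Ustar N P al lam T) = min (bfun N P al lam T (?k - 1)) (bfun N P al lam T ?k)"
    using N unfolding Ustar_def bfun_def by (auto simp: min_def)
  show ?thesis
  proof (cases "U = ?k")
    case False
    then have "U \<le> ?k - 1" "?k - 1 < ?k" using U N by simp_all
    then have "bfun N P al lam T (?k - 1) \<le> bfun N P al lam T U"
      using b2_antimono[of U "?k - 1"] A2 by (simp add: bfun_def mult_left_mono)
    then show ?thesis unfolding Us by (rule min.coboundedI1)
  qed (simp add: Us)
qed

context model
begin

lemma eventually_Fout_Ustar_le:
  assumes N: "N 2 < N 1" "N 2 \<ge> 1" and T: "max (T 1) (T 2) > 1"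
  shows "eventually (\<lambda>\<beta>. \<forall>U\<in>{..<N 1}.
           Fout N P al lam T (Ustar N P al lam T) \<beta> \<le> Fout N P al lam T U \<beta>) (at_right 0)"
  unfolding Fout_def
proof (rule eventually_minimizer_at_right_0)
  let ?Us = "Ustar N P al lam T" and ?e = "\<lambda>U. min (N 1 - U) (N 2)"
  have e_Us: "?e ?Us = N 2"
    using Ustar_le[of N P al lam T] N by simp
  fix U assume U: "U \<in> {..<N 1}"
  show "?e U \<le> ?e ?Us" using e_Us by simp
  show "bfun N P al lam T ?Us \<le> bfun N P al lam T U" if "?e U = ?e ?Us"
  proof (rule bfun_Ustar_le[OF N(1)])
    have "N 2 \<le> N 1 - U" using that e_Us by (simp add: min_def split: if_splits)
    then show "U \<le> N 1 - N 2" using N by arith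
    show "\<And>U U'. U \<le> U' \<Longrightarrow> bj N P al lam T U' 2 \<le> bj N P al lam T U 2"
      by (rule bj_2_antimono)
  qed (rule less_imp_le[OF t2.Acal_pos])
  show "bfun N P al lam T U > 0" if "?e U < ?e ?Us"
  proof -
    have "N 1 - U < N 2" using that e_Us by (simp add: min_def split: if_splits)
    then have "N 1 - N 2 < U" using N by arith
    then show ?thesis using bj_1_pos[OF T] t1.Acal_pos by (simp add: bfun_def)
  qed
qed simp

end

theorem lemma4:
  fixes N :: "nat \<Rightarrow> nat" and P al lam T :: "nat \<Rightarrow> real"
  assumes "N 1 > N 2" and "N 2 \<ge> 1"
    and "P 1 > 0" and "P 2 > 0"
    and "al 1 > 2" and "al 2 > 2"
    and "lam 1 > 0" and "lam 2 > 0"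
    and "T 1 \<ge> 1" and "T 2 \<ge> 1"
    and "max (T 1) (T 2) > 1"
  shows "\<exists>\<beta>bar > 0. \<forall>\<beta>. 0 < \<beta> \<and> \<beta> < \<beta>bar \<longrightarrow>
           Ustar N P al lam T < N 1 \<and>
           (\<forall>U < N 1. Fout N P al lam T (Ustar N P al lam T) \<beta> \<le> Fout N P al lam T U \<beta>)"
proof -
  interpret model P al lam T
    using assms by unfold_locales auto
  have "\<exists>\<beta>bar>0. \<forall>\<beta>>0. \<beta> < \<beta>bar \<longrightarrow>
          (\<forall>U\<in>{..<N 1}. Fout N P al lam T (Ustar N P al lam T) \<beta> \<le> Fout N P al lam T U \<beta>)"
    using eventually_Fout_Ustar_le[OF assms(1,2,11)] by (simp only: eventually_at_right_field)
  moreover have "Ustar N P al lam T < N 1"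
    using Ustar_le[of N P al lam T] assms(1,2) by arith
  ultimately show ?thesis by auto
qed

end
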